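(* Let $p$ be a prime. Then $\mathcal{M}_p\subseteq\{1,2,6,42,1806\}\cup p\cdot\mathcal{W}$.
   Context: For positive integers $k,n$ let $S_k(n)=\sum_{i=1}^{n} i^k$. For an integer $a$, $\mathcal{M}_a$ denotes the set of positive integers $n$ such that $S_n(n)\equiv a\pmod{n}$. A positive integer $n$ is a weak primary pseudoperfect number if $\sum_{q\mid n,\ q\text{ prime}} \frac{n}{q}+1\equiv 0\pmod{n}$; $\mathcal{W}$ denotes the set of weak primary pseudoperfect numbers. For a set $A$ and integer $c$, $c\cdot A=\{ca: a\in A\}$. *)

theory Defs
  imports "HOL-Computational_Algebra.Primes" "HOL-Number_Theory.Cong"
begin

definition S :: "nat \<Rightarrow> nat \<Rightarrow> nat" where
  "S k n = (\<Sum>i=1..n. i ^ k)"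

definition M :: "int \<Rightarrow> nat set" where
  "M a = {n. n > 0 \<and> [int (S n n) = a] (mod int n)}"

definition W :: "nat set" where
  "W = {n. n > 0 \<and> [(\<Sum>q\<in>{q. prime q \<and> q dvd n}. n div q) + 1 = 0] (mod n)}"

end

theory Submission
  imports Defs "HOL-Number_Theory.Number_Theory" "HOL-Computational_Algebra.Squarefree"
begin

text \<open>If \<open>q\<^sup>e\<close> divides \<open>n\<close> for a prime \<open>q\<close>, then modulo \<open>q\<^sup>e\<close> only the \<open>i < n\<close> prime to \<open>q\<close>
  contribute to \<open>S\<^sub>n(n)\<close>. If \<open>q - 1\<close> divides \<open>n\<close>, each of them contributes \<open>1\<close> by Euler's
  theorem, so \<open>S\<^sub>n(n) \<equiv> n - n/q\<close>; otherwise multiplication by a unit \<open>g\<close> with \<open>g\<^sup>n\<close> not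
  congruent to \<open>1\<close> modulo \<open>q\<close> permutes them, so \<open>S\<^sub>n(n) \<equiv> 0\<close>.

  For \<open>n \<in> M\<^sub>p\<close> this yields, for every prime \<open>q \<noteq> p\<close> dividing \<open>n\<close>, that \<open>q - 1\<close> divides \<open>n\<close>,
  \<open>q\<^sup>2\<close> does not, and \<open>q\<close> divides \<open>n/q + p\<close>; moreover \<open>p\<^sup>2 | n\<close> forces \<open>p | n/p\<^sup>2 + 1\<close>.
  If \<open>p\<close> does not divide \<open>n\<close>, then \<open>n\<close> is squarefree and divisible by \<open>q - 1\<close> for each of its
  prime factors \<open>q\<close>, which leaves only \<open>1, 2, 6, 42, 1806\<close>. If \<open>p | n\<close>, the same conditions
  say that \<open>w = n/p\<close> is squarefree with \<open>q | w/q + 1\<close> for each prime factor \<open>q\<close>, i.e. \<open>w \<in> W\<close>.\<close>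

lemma S_self_eq: "n > 0 \<Longrightarrow> S n n = (\<Sum>i<n. i ^ n) + n ^ n"
proof -
  assume "n > 0"
  then have "{1..n} = insert n {1..<n}" and "{..<n} = insert 0 {1..<n}" by auto
  with \<open>n > 0\<close> show ?thesis unfolding S_def by simp
qed

lemma card_multiples_lessThan:
  fixes q n :: nat
  assumes "q > 0" and "q dvd n"
  shows "card {i \<in> {..<n}. q dvd i} = n div q"
proof -
  have "{i \<in> {..<n}. q dvd i} = (\<lambda>j. q * j) ` {..<n div q}"
    using assms by (auto simp: image_iff mult.commute[of q] less_mult_imp_div_less
        elim!: dvdE intro: bexI[where x = "_ div q"])
  moreover have "inj_on (\<lambda>j. q * j) {..<n div q}" using assms by (auto simp: inj_on_def)
  ultimately show ?thesis by (simp add: card_image)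
qed

lemma S_self_cong_sum_nonmultiples:
  assumes q: "prime q" and n: "n > 0" and e: "q ^ e dvd n"
  shows "[S n n = (\<Sum>i\<in>{i \<in> {..<n}. \<not> q dvd i}. i ^ n)] (mod q ^ e)"
proof -
  let ?U = "{i \<in> {..<n}. \<not> q dvd i}" and ?V = "{i \<in> {..<n}. q dvd i}"
  have split: "(\<Sum>i<n. i ^ n) = (\<Sum>i\<in>?U. i ^ n) + (\<Sum>i\<in>?V. i ^ n)"
    by (subst sum.union_disjoint[symmetric]) (auto intro: sum.cong)
  have "e < q ^ e" using prime_gt_1_nat[OF q] by (simp add: power_gt_expt)
  also have "q ^ e \<le> n" using e n by (simp add: dvd_imp_le)
  finally have "e \<le> n" by simp
  then have "q ^ e dvd i ^ n" if "q dvd i" for i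
    using that by (meson dvd_power_same dvd_trans le_imp_power_dvd)
  then have "q ^ e dvd (\<Sum>i\<in>?V. i ^ n) + n ^ n"
    using e n by (auto intro!: dvd_add dvd_sum dvd_power intro: dvd_trans)
  then show ?thesis
    using S_self_eq[OF n] split by (simp add: cong_0_iff cong_add_lcancel_0_nat add.assoc)
qed

lemma S_self_cong_if_pred_dvd:
  assumes q: "prime q" and n: "n > 0" and e: "q ^ e dvd n" "e \<ge> 1" and pred: "(q - 1) dvd n"
  shows "[S n n = n - n div q] (mod q ^ e)"
proof -
  let ?U = "{i \<in> {..<n}. \<not> q dvd i}"
  have qn: "q dvd n" using e by (metis dvd_power_le dvd_refl dvd_trans power_one_right)
  have "totient (q ^ e) = q ^ (e - 1) * (q - 1)" using totient_prime_power[OF q] e by simp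
  moreover have "q ^ (e - 1) dvd n" using e by (meson diff_le_self dvd_trans le_imp_power_dvd)
  moreover have "coprime (q ^ (e - 1)) (q - 1)"
    using q by (metis coprime_diff_one_right_nat coprime_power_left_iff prime_gt_0_nat)
  ultimately have totient_dvd: "totient (q ^ e) dvd n" using pred by (simp add: divides_mult)
  have "[i ^ n = 1] (mod q ^ e)" if "i \<in> ?U" for i
  proof -
    have "coprime q i" using that q by (simp add: prime_imp_coprime)
    then have "coprime i (q ^ e)" by (simp add: coprime_commute)
    then have "[(i ^ totient (q ^ e)) ^ (n div totient (q ^ e)) = 1 ^ (n div totient (q ^ e))] (mod q ^ e)"
      by (intro cong_pow euler_theorem)
    then show ?thesis using totient_dvd by (simp add: power_mult[symmetric])
  qed
  then have "[(\<Sum>i\<in>?U. i ^ n) = card ?U] (mod q ^ e)"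
    using cong_sum[of ?U "\<lambda>i. i ^ n" "\<lambda>_. 1"] by simp
  moreover have "card ?U = n - n div q"
  proof -
    have "?U = {..<n} - {i \<in> {..<n}. q dvd i}" by auto
    then have "card ?U = card ({..<n} - {i \<in> {..<n}. q dvd i})" by simp
    also have "\<dots> = n - n div q"
      using card_multiples_lessThan[OF prime_gt_0_nat[OF q] qn] by (subst card_Diff_subset) auto
    finally show ?thesis .
  qed
  ultimately show ?thesis using S_self_cong_sum_nonmultiples[OF q n e(1)] by (metis cong_trans)
qed

lemma exists_coprime_pow_not_cong_one:
  fixes q n :: nat
  assumes q: "prime q" and n: "n > 0" and pred: "\<not> (q - 1) dvd n"
  obtains g where "coprime g n" and "\<not> [g ^ n = 1] (mod q)"
proof -
  obtain r where "residue_primroot q r"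
    using prime_primitive_root_exists[OF prime_gt_1_nat[OF q] q] by blast
  then have "coprime q r" and ord_r: "ord q r = q - 1"
    by (auto simp: residue_primroot_def totient_prime[OF q])
  define m where "m = n div q ^ multiplicity q n"
  have "\<not> q dvd m" unfolding m_def using n q by (intro multiplicity_decompose) auto
  then have "coprime q m" using q by (simp add: prime_imp_coprime)
  then obtain g where g_q: "[g = r] (mod q)" and g_m: "[g = 1] (mod m)"
    using binary_chinese_remainder_nat by blast
  \<comment> \<open>\<open>g\<close> is a primitive root modulo \<open>q\<close> and a unit modulo the \<open>q\<close>-free part \<open>m\<close> of \<open>n\<close>.\<close>
  have "coprime g q" using cong_imp_coprime[OF cong_sym[OF g_q]] \<open>coprime q r\<close>
    by (simp add: coprime_commute)
  moreover have "coprime g m" using cong_imp_coprime[OF cong_sym[OF g_m]] by simp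
  moreover have "n = q ^ multiplicity q n * m" unfolding m_def by (simp add: multiplicity_dvd)
  ultimately have "coprime g n" by (metis coprime_mult_right_iff coprime_power_right_iff)
  moreover have "\<not> [g ^ n = 1] (mod q)"
  proof
    assume "[g ^ n = 1] (mod q)"
    then have "[r ^ n = 1] (mod q)" using cong_pow[OF g_q, of n] by (metis cong_sym cong_trans)
    then show False using ord_r pred by (simp only: ord_divides)
  qed
  ultimately show ?thesis by (rule that)
qed

lemma sum_pow_nonmultiples_mult_cong:
  fixes q n g k d :: nat
  assumes q: "prime q" and qn: "q dvd n" and g: "coprime g n" and d: "d dvd n"
  defines "U \<equiv> {i \<in> {..<n}. \<not> q dvd i}"
  shows "[g ^ k * (\<Sum>i\<in>U. i ^ k) = (\<Sum>i\<in>U. i ^ k)] (mod d)"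
proof -
  define h where "h i = g * i mod n" for i
  have h_U: "h ` U \<subseteq> U"
  proof
    fix x assume "x \<in> h ` U"
    then obtain i where i: "i \<in> U" and x: "x = g * i mod n" by (auto simp: h_def)
    have "\<not> q dvd g" using g qn q by (meson coprime_common_divisor not_prime_unit)
    then have "\<not> q dvd g * i" using i q by (simp add: U_def prime_dvd_mult_iff)
    then show "x \<in> U" using i qn by (auto simp: U_def x dvd_mod_iff)
  qed
  have h_inj: "inj_on h U"
  proof
    fix i j assume "i \<in> U" "j \<in> U" "h i = h j"
    then have "[i = j] (mod n)"
      using g by (simp add: h_def cong_def[symmetric] cong_mult_lcancel_nat)
    with \<open>i \<in> U\<close> \<open>j \<in> U\<close> show "i = j" by (simp add: U_def cong_def)
  qed
  have "h ` U = U" using h_inj by (intro endo_inj_surj[OF _ h_U]) (simp_all add: U_def)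
  then have "(\<Sum>i\<in>U. i ^ k) = (\<Sum>i\<in>h ` U. i ^ k)" by simp
  also have "\<dots> = (\<Sum>i\<in>U. h i ^ k)" using h_inj by (simp add: sum.reindex)
  also have "[\<dots> = (\<Sum>i\<in>U. (g * i) ^ k)] (mod d)"
    using d by (intro cong_sum cong_pow) (simp add: h_def cong_def mod_mod_cancel)
  also have "(\<Sum>i\<in>U. (g * i) ^ k) = g ^ k * (\<Sum>i\<in>U. i ^ k)"
    by (simp add: power_mult_distrib sum_distrib_left)
  finally show ?thesis by (rule cong_sym)
qed

lemma S_self_cong_0_if_not_pred_dvd:
  assumes q: "prime q" and n: "n > 0" and e: "q ^ e dvd n" and qn: "q dvd n"
    and pred: "\<not> (q - 1) dvd n"
  shows "[S n n = 0] (mod q ^ e)"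
proof -
  define X where "X = (\<Sum>i\<in>{i \<in> {..<n}. \<not> q dvd i}. i ^ n)"
  obtain g where g: "coprime g n" and g_pow: "\<not> [g ^ n = 1] (mod q)"
    using exists_coprime_pow_not_cong_one[OF q n pred] .
  have "g > 0" using g qn q by (cases "g = 0") (auto simp: not_prime_unit)
  have "[g ^ n * X = 1 * X] (mod q ^ e)"
    using sum_pow_nonmultiples_mult_cong[OF q qn g e] by (simp add: X_def)
  then have "q ^ e dvd (g ^ n - 1) * X"
    using \<open>g > 0\<close> by (simp add: cong_altdef_nat diff_mult_distrib)
  moreover have "\<not> q dvd g ^ n - 1" using g_pow \<open>g > 0\<close> by (simp add: cong_altdef_nat)
  with q have "coprime (q ^ e) (g ^ n - 1)" by (simp add: prime_imp_coprime)
  ultimately have "q ^ e dvd X" using coprime_dvd_mult_right_iff by blast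
  then show ?thesis
    using S_self_cong_sum_nonmultiples[OF q n e] by (metis X_def cong_0_iff cong_trans)
qed

lemma S_self_int_cong_if_pred_dvd:
  assumes "prime q" "n > 0" "q ^ e dvd n" "e \<ge> 1" "(q - 1) dvd n"
  shows "[int (S n n) = int n - int (n div q)] (mod int q ^ e)"
  using S_self_cong_if_pred_dvd[OF assms] by (simp add: cong_int_iff[symmetric] of_nat_diff)

lemma M_prime_factor:
  fixes p q n :: nat
  assumes p: "prime p" and q: "prime q" "q \<noteq> p" and n: "n \<in> M (int p)" and qn: "q dvd n"
  shows "(q - 1) dvd n" and "q dvd n div q + p" and "\<not> q ^ 2 dvd n"
proof -
  have "n > 0" and S_p: "[int (S n n) = int p] (mod int q)"
    using n qn by (auto simp: M_def intro: cong_dvd_modulus)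
  have q_p: "\<not> q dvd p" using p q primes_dvd_imp_eq by blast
  show pred: "(q - 1) dvd n"
  proof (rule ccontr)
    assume "\<not> (q - 1) dvd n"
    then have "[int (S n n) = 0] (mod int q)"
      using S_self_cong_0_if_not_pred_dvd[OF q(1) \<open>n > 0\<close> _ qn, of 1] qn
      by (simp add: cong_int_iff[symmetric])
    with S_p have "[int p = 0] (mod int q)" by (metis cong_sym cong_trans)
    with q_p show False by (simp add: cong_0_iff)
  qed
  have "[int p = int (S n n)] (mod int q)" using S_p by (rule cong_sym)
  also have "[int (S n n) = int n - int (n div q)] (mod int q)"
    using S_self_int_cong_if_pred_dvd[OF q(1) \<open>n > 0\<close> _ _ pred, of 1] qn by simp
  also have "[int n - int (n div q) = 0 - int (n div q)] (mod int q)"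
    using qn by (intro cong_diff cong_refl) (simp add: cong_0_iff)
  finally show key: "q dvd n div q + p"
    by (simp add: cong_iff_dvd_diff add.commute flip: of_nat_add)
  show "\<not> q ^ 2 dvd n"
  proof
    assume "q ^ 2 dvd n"
    then have "q dvd n div q" using q(1) by (auto simp: power2_eq_square)
    with key q_p show False by (simp add: dvd_add_right_iff)
  qed
qed

lemma M_prime_square_factor:
  fixes p n :: nat
  assumes p: "prime p" and n: "n \<in> M (int p)" and pn: "p ^ 2 dvd n"
  shows "p dvd n div p ^ 2 + 1"
proof -
  have "int p ^ 2 dvd int n" using pn by (metis of_nat_dvd_iff of_nat_power)
  then have "n > 0" and S_p: "[int (S n n) = int p] (mod int p ^ 2)"
    using n by (auto simp: M_def intro: cong_dvd_modulus)
  have p_gt: "p > 1" using p by (rule prime_gt_1_nat)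
  have "\<not> p ^ 2 dvd p" using p_gt by (auto dest: dvd_imp_le simp: power2_eq_square)
  have pred: "(p - 1) dvd n"
  proof (rule ccontr)
    assume "\<not> (p - 1) dvd n"
    then have "[S n n = 0] (mod p ^ 2)"
      using S_self_cong_0_if_not_pred_dvd[OF p \<open>n > 0\<close> pn] pn
      by (simp add: power2_eq_square dvd_mult_left)
    then have "[int (S n n) = 0] (mod int p ^ 2)" by (simp add: cong_int_iff[symmetric])
    with S_p have "[int p = 0] (mod int p ^ 2)" by (metis cong_sym cong_trans)
    with \<open>\<not> p ^ 2 dvd p\<close> show False by (simp add: cong_0_iff flip: of_nat_power)
  qed
  obtain m where m: "n = p ^ 2 * m" using pn by blast
  have "[int p = int (S n n)] (mod int p ^ 2)" using S_p by (rule cong_sym)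
  also have "[int (S n n) = int n - int (p * m)] (mod int p ^ 2)"
    using S_self_int_cong_if_pred_dvd[OF p \<open>n > 0\<close> pn _ pred] m p_gt by (simp add: power2_eq_square)
  also have "[int n - int (p * m) = 0 - int (p * m)] (mod int p ^ 2)"
    using \<open>int p ^ 2 dvd int n\<close> by (intro cong_diff cong_refl) (simp add: cong_0_iff)
  finally have "int p * int p dvd int p * (int m + 1)"
    by (simp add: cong_iff_dvd_diff power2_eq_square algebra_simps)
  then have "int p dvd int (m + 1)" using p_gt by (simp add: add.commute)
  then have "p dvd m + 1" by (simp only: int_dvd_int_iff)
  then show ?thesis using m p_gt by simp
qed

lemma squarefree_dvd_if_prime_dvd:
  fixes w x :: nat
  assumes sf: "squarefree w" and dvd: "\<And>r. prime r \<Longrightarrow> r dvd w \<Longrightarrow> r dvd x"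
  shows "w dvd x"
proof (cases "x = 0")
  case False
  show ?thesis
  proof (rule multiplicity_le_imp_dvd)
    show "w \<noteq> 0" using sf by (metis not_squarefree_0)
    fix r :: nat assume r: "prime r"
    show "multiplicity r w \<le> multiplicity r x"
    proof (cases "r dvd w")
      case True
      have "multiplicity r w \<le> 1" using sf r \<open>w \<noteq> 0\<close> by (simp add: squarefree_factorial_semiring'')
      moreover have "multiplicity r x > 0"
        using r dvd[OF r True] False by (simp add: prime_multiplicity_gt_zero_iff)
      ultimately show ?thesis by linarith
    qed (simp add: not_dvd_imp_multiplicity_0)
  qed
qed simp

lemma dvd_1806_cases:
  fixes d :: nat
  assumes "d dvd 1806"
  shows "d \<in> {1, 2, 3, 6, 7, 14, 21, 42, 43, 86, 129, 258, 301, 602, 903, 1806}"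
proof -
  have prime_divisors: "x = 1 \<or> x = p" if "prime p" "x dvd p" for x p :: nat
    using that prime_nat_iff by auto
  have "prime (7::nat)" and "prime (43::nat)" by simp_all
  have "d dvd 2 * (3 * (7 * 43))" using assms by simp
  then obtain a r where a: "a dvd 2" and r: "r dvd 3 * (7 * 43)" and d: "d = a * r"
    by (metis dvd_productE)
  then obtain b s where b: "b dvd 3" and s: "s dvd 7 * 43" and r: "r = b * s"
    by (metis dvd_productE)
  then obtain c e where c: "c dvd 7" and e: "e dvd 43" and s: "s = c * e"
    by (metis dvd_productE)
  have "a = 1 \<or> a = 2" using prime_divisors[OF _ a] by simp
  moreover have "b = 1 \<or> b = 3" using prime_divisors[OF _ b] by simp
  moreover have "c = 1 \<or> c = 7" using prime_divisors[OF \<open>prime 7\<close> c] .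
  moreover have "e = 1 \<or> e = 43" using prime_divisors[OF \<open>prime 43\<close> e] .
  ultimately show ?thesis using d r s by auto
qed

lemma prime_succ_dvd_1806_cases:
  fixes q :: nat
  assumes "q dvd 1806" and "prime (q + 1)"
  shows "q + 1 \<in> {2, 3, 7, 43}"
proof -
  have composite: "\<not> prime n" if "k dvd n" "1 < k" "k < n" for k n :: nat
    using that prime_nat_iff by auto
  have "\<not> prime n" if "n \<in> {4, 8, 22, 44, 130, 302, 904}" for n :: nat
    by (rule composite[of 2]) (use that in auto)
  moreover have "\<not> prime n" if "n \<in> {15, 87, 603}" for n :: nat
    by (rule composite[of 3]) (use that in auto)
  moreover have "\<not> prime (259::nat)" by (rule composite[of 7]) simp_all
  moreover have "\<not> prime (1807::nat)" by (rule composite[of 13]) simp_all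
  moreover have "q + 1 \<in> {2, 3, 4, 7, 8, 15, 22, 43, 44, 87, 130, 259, 302, 603, 904, 1807}"
    using dvd_1806_cases[OF assms(1)] by auto
  ultimately show ?thesis using assms(2) by (elim insertE emptyE; simp del: prime_nat_numeral_eq)
qed

text \<open>Every prime factor \<open>q\<close> of \<open>n\<close> lies in \<open>{2, 3, 7, 43}\<close> by strong induction on \<open>q\<close>:
  \<open>q - 1\<close> is a squarefree divisor of \<open>n\<close> whose prime factors are smaller than \<open>q\<close>,
  so \<open>q - 1\<close> divides \<open>2 \<cdot> 3 \<cdot> 7 \<cdot> 43 = 1806\<close>.\<close>
lemma squarefree_pred_prime_dvd_cases:
  fixes n :: nat
  assumes sf: "squarefree n" and pred: "\<And>q. prime q \<Longrightarrow> q dvd n \<Longrightarrow> (q - 1) dvd n"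
  shows "n \<in> {1, 2, 6, 42, 1806}"
proof -
  have prime_factors_n: "q \<in> {2, 3, 7, 43}" if "prime q" "q dvd n" for q
    using that
  proof (induction q rule: less_induct)
    case (less q)
    have q_gt: "q > 1" using less.prems(1) by (rule prime_gt_1_nat)
    have pred_n: "(q - 1) dvd n" using pred less.prems by blast
    then have "squarefree (q - 1)" using sf by (rule squarefree_mono)
    moreover have "r dvd 1806" if r: "prime r" "r dvd q - 1" for r
    proof -
      have "r < q" using r q_gt by (auto dest: dvd_imp_le)
      moreover have "r dvd n" using r(2) pred_n by (rule dvd_trans)
      ultimately have "r \<in> {2, 3, 7, 43}" using less.IH r(1) by blast
      then show ?thesis by auto
    qed
    ultimately have "(q - 1) dvd 1806" by (rule squarefree_dvd_if_prime_dvd)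
    then have "q - 1 + 1 \<in> {2, 3, 7, 43}"
      using less.prems(1) q_gt by (intro prime_succ_dvd_1806_cases) simp_all
    then show ?case using q_gt by simp
  qed
  have "r dvd 1806" if "prime r" "r dvd n" for r using prime_factors_n[OF that] by auto
  then have "n dvd 1806" by (rule squarefree_dvd_if_prime_dvd[OF sf])
  have "prime (3::nat)" "prime (7::nat)" "prime (43::nat)" by simp_all
  then have "3 dvd n \<Longrightarrow> 2 dvd n" "7 dvd n \<Longrightarrow> 6 dvd n" "43 dvd n \<Longrightarrow> 42 dvd n"
    using pred[of 3] pred[of 7] pred[of 43] by simp_all
  with \<open>n dvd 1806\<close> show ?thesis using dvd_1806_cases[of n] by auto
qed

lemma W_memberI:
  fixes w :: nat
  assumes sf: "squarefree w" and dvd: "\<And>q. prime q \<Longrightarrow> q dvd w \<Longrightarrow> q dvd w div q + 1"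
  shows "w \<in> W"
proof -
  let ?P = "{q. prime q \<and> q dvd w}"
  have "w \<noteq> 0" using sf by (metis not_squarefree_0)
  have "q dvd (\<Sum>r\<in>?P. w div r) + 1" if q: "prime q" "q dvd w" for q
  proof -
    have "finite ?P" using \<open>w \<noteq> 0\<close> by (auto intro: finite_subset[of _ "{..w}"] dvd_imp_le)
    then have "(\<Sum>r\<in>?P. w div r) + 1 = (w div q + 1) + (\<Sum>r\<in>?P - {q}. w div r)"
      using q by (simp add: sum.remove)
    moreover have others: "q dvd w div r" if r: "r \<in> ?P - {q}" for r
    proof -
      have "q dvd r * (w div r)" using r q by simp
      moreover have "\<not> q dvd r" using r q primes_dvd_imp_eq by blast
      ultimately show ?thesis using q(1) prime_dvd_mult_iff by blast
    qed
    moreover have "q dvd (w div q + 1) + (\<Sum>r\<in>?P - {q}. w div r)"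
      using others by (intro dvd_add[OF dvd[OF q]] dvd_sum) blast
    ultimately show ?thesis by simp
  qed
  then have "w dvd (\<Sum>r\<in>?P. w div r) + 1" by (rule squarefree_dvd_if_prime_dvd[OF sf])
  then show ?thesis unfolding W_def using \<open>w \<noteq> 0\<close> by (simp add: cong_0_iff)
qed

lemma M_not_multiple_cases:
  fixes p n :: nat
  assumes p: "prime p" and n: "n \<in> M (int p)" and pn: "\<not> p dvd n"
  shows "n \<in> {1, 2, 6, 42, 1806}"
proof (rule squarefree_pred_prime_dvd_cases)
  have q_p: "q \<noteq> p" if "q dvd n" for q using that pn by auto
  have "n \<noteq> 0" using n by (simp add: M_def)
  then show "squarefree n"
    unfolding squarefree_factorial_semiring[OF \<open>n \<noteq> 0\<close>]
  proof (intro allI impI notI)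
    fix q :: nat assume q: "prime q" "q ^ 2 dvd n"
    then have "q dvd n" by (simp add: power2_eq_square dvd_mult_left)
    with q show False using M_prime_factor(3)[OF p q(1) q_p n] by blast
  qed
  show "(q - 1) dvd n" if "prime q" "q dvd n" for q
    using M_prime_factor(1)[OF p that(1) q_p n] that(2) by blast
qed

lemma M_multiple_div_in_W:
  fixes p n :: nat
  assumes p: "prime p" and n: "n \<in> M (int p)" and pn: "p dvd n"
  shows "n div p \<in> W"
proof -
  obtain w where nw: "n = p * w" using pn by blast
  have "w \<noteq> 0" using n nw by (auto simp: M_def)
  have dvd: "q dvd w div q + 1" if q: "prime q" "q dvd w" for q
  proof (cases "q = p")
    case True
    then have "p ^ 2 dvd n" using nw q(2) by (simp add: power2_eq_square)
    then show ?thesis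
      using M_prime_square_factor[OF p n] True nw p by (simp add: power2_eq_square div_mult2_eq)
  next
    case False
    have "q dvd n div q + p" using M_prime_factor(2)[OF p q(1) False n] nw q(2) by simp
    moreover have "n div q + p = p * (w div q + 1)" using nw q(2) by (auto simp: div_mult_swap)
    moreover have "coprime q p" using p q(1) False by (simp add: primes_coprime)
    ultimately show ?thesis by (metis coprime_dvd_mult_right_iff)
  qed
  have "squarefree w"
    unfolding squarefree_factorial_semiring[OF \<open>w \<noteq> 0\<close>]
  proof (intro allI impI notI)
    fix q :: nat assume q: "prime q" "q ^ 2 dvd w"
    then have "q dvd w" "q dvd w div q" by (auto simp: power2_eq_square)
    with dvd[OF q(1)] have "q dvd 1" using dvd_add_right_iff by blast
    with q(1) show False by (simp add: not_prime_unit)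
  qed
  then have "w \<in> W" using dvd by (rule W_memberI)
  then show ?thesis using nw p by (simp add: prime_gt_0_nat)
qed

theorem mainTheorem13:
  fixes p :: nat
  assumes "prime p"
  shows "M (int p) \<subseteq> {1, 2, 6, 42, 1806} \<union> (\<lambda>w. p * w) ` W"
proof
  fix n assume n: "n \<in> M (int p)"
  show "n \<in> {1, 2, 6, 42, 1806} \<union> (\<lambda>w. p * w) ` W"
  proof (cases "p dvd n")
    case True
    then have "n = p * (n div p)" by simp
    with M_multiple_div_in_W[OF assms n True] show ?thesis by blast
  next
    case False
    with M_not_multiple_cases[OF assms n] show ?thesis by blast
  qed
qed

end
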